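(* Let $\mathcal{L}$ be a lattice. If there is an infinite set $L\subseteq\mathcal{L}$ such that for all $\ell,\ell'\in L$, $\ell\sqsubseteq\ell'$ implies $\ell=\ell'$, then the exponential lattice $2^{\mathcal{L}}$ is $\Theta(2^n)$.
   Context: A lattice means a partially ordered set $(\mathcal{L},\sqsubseteq)$ with least element $\bot$ in which any two elements have a least upper bound $\sqcup$; $\bigsqcup S$ denotes the least upper bound of a finite set ($\bigsqcup\emptyset=\bot$). The exponential lattice $2^{\mathcal{L}}$ has as elements subsets of $\mathcal{L}$, preordered by $\ell\sqsubseteq\ell'$ iff for every $\jmath\in\ell$ there is $\jmath'\in\ell'$ with $\jmath\sqsubseteq\jmath'$, and quotiented by the equivalence $\ell\sim\ell'$ iff $\ell\sqsubseteq\ell'$ and $\ell'\sqsubseteq\ell$ (so the order is antisymmetric). The closure set of a finite $S$ is $C(S)=\{\bigsqcup S' : S'\subseteq S\}$, $CS_{\mathcal{L}}(n)=\max\{|C(S)| : S\subseteq\mathcal{L}\text{ finite}, |S|\le n\}$. For $f,g:\mathbb{N}\to\mathbb{N}$, $f$ is $O(g)$ (resp. $\Omega(g)$) iff there exist $N_0\in\mathbb{N}$ and rational $C>0$ with $f(n)\le Cg(n)$ (resp. $\ge$) for all $n\ge N_0$; $\Theta$ means both. A lattice is $\Theta(f(n))$ iff its $CS$ is. *)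

theory Defs
  imports Main "HOL-Library.Landau_Symbols"
begin

text \<open>Lattices in the sense of the paper: partial orders with least element in which any
  two elements have a least upper bound, i.e. the class bounded_semilattice_sup_bot.\<close>

definition fsup :: "'a::bounded_semilattice_sup_bot set \<Rightarrow> 'a" where
  "fsup S = Finite_Set.fold sup bot S"

definition closure_set :: "'a::bounded_semilattice_sup_bot set \<Rightarrow> 'a set" where
  "closure_set S = {fsup S' | S'. S' \<subseteq> S}"

definition CS :: "'a::bounded_semilattice_sup_bot itself \<Rightarrow> nat \<Rightarrow> nat" where
  "CS _ n = Max {card (closure_set (S :: 'a set)) | S. finite S \<and> card S \<le> n}"

text \<open>The exponential lattice: subsets of the base lattice, preordered by domination,
  quotiented by mutual domination.\<close>
definition exp_le :: "'a::order set \<Rightarrow> 'a set \<Rightarrow> bool" where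
  "exp_le A B \<longleftrightarrow> (\<forall>x\<in>A. \<exists>y\<in>B. x \<le> y)"

definition exp_eq :: "'a::order set \<Rightarrow> 'a set \<Rightarrow> bool" where
  "exp_eq A B \<longleftrightarrow> exp_le A B \<and> exp_le B A"

lemma exp_le_refl: "exp_le A A"
  unfolding exp_le_def by auto

lemma exp_le_trans: "exp_le A B \<Longrightarrow> exp_le B C \<Longrightarrow> exp_le A C"
  unfolding exp_le_def by (meson order_trans)

lemma equivp_exp_eq: "equivp exp_eq"
  by (rule equivpI) (auto simp: reflp_def symp_def transp_def exp_eq_def
      intro: exp_le_refl exp_le_trans)

quotient_type (overloaded) 'a explat = "'a::order set" / exp_eq
  morphisms rep_explat abs_explat
  by (rule equivp_exp_eq)

instantiation explat :: (order) bounded_semilattice_sup_bot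
begin

lift_definition less_eq_explat :: "'a explat \<Rightarrow> 'a explat \<Rightarrow> bool" is exp_le
  unfolding exp_eq_def by (meson exp_le_trans)

definition less_explat :: "'a explat \<Rightarrow> 'a explat \<Rightarrow> bool" where
  "less_explat x y \<longleftrightarrow> x \<le> y \<and> \<not> y \<le> x"

lift_definition sup_explat :: "'a explat \<Rightarrow> 'a explat \<Rightarrow> 'a explat" is "(\<union>)"
  unfolding exp_eq_def exp_le_def by blast

lift_definition bot_explat :: "'a explat" is "{}" .

instance
proof
  fix x y z :: "'a explat"
  show "(x < y) = (x \<le> y \<and> \<not> y \<le> x)" by (simp add: less_explat_def)
  show "x \<le> x" by transfer (rule exp_le_refl)
  show "x \<le> y \<Longrightarrow> y \<le> z \<Longrightarrow> x \<le> z" by transfer (rule exp_le_trans)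
  show "x \<le> y \<Longrightarrow> y \<le> x \<Longrightarrow> x = y" by transfer (simp add: exp_eq_def)
  show "x \<le> sup x y" by transfer (auto simp: exp_le_def)
  show "y \<le> sup x y" by transfer (auto simp: exp_le_def)
  show "y \<le> x \<Longrightarrow> z \<le> x \<Longrightarrow> sup y z \<le> x" by transfer (auto simp: exp_le_def)
  show "bot \<le> x" by transfer (simp add: exp_le_def)
qed

end

end

theory Submission
  imports Defs
begin

text \<open>Each closure set has at most \<open>2^n\<close> elements, one per subset of the generators, so
  \<open>CS(n) \<le> 2^n\<close> in every lattice. Conversely, in \<open>2\<^sup>\<L>\<close> the singletons of an antichain
  \<open>A\<close> of size \<open>n\<close> generate the classes of all subsets of \<open>A\<close>, and these \<open>2^n\<close> classes are
  pairwise distinct because two subsets of an antichain dominate each other only if they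
  are equal. An infinite antichain provides such an \<open>A\<close> for every \<open>n\<close>, hence
  \<open>CS(n) = 2^n\<close> exactly.\<close>

lemma fsup_empty [simp]: "fsup {} = bot"
  unfolding fsup_def by simp

lemma fsup_insert [simp]:
  fixes S :: "'a::bounded_semilattice_sup_bot set"
  assumes "finite S"
  shows "fsup (insert x S) = sup x (fsup S)"
proof -
  interpret comp_fun_idem "sup :: 'a \<Rightarrow> 'a \<Rightarrow> 'a" by (fact comp_fun_idem_sup)
  show ?thesis unfolding fsup_def using assms by (simp add: fold_insert_idem)
qed

lemma closure_set_eq_image_Pow: "closure_set S = fsup ` Pow S"
  unfolding closure_set_def by auto

lemma card_closure_set_le:
  fixes S :: "'a::bounded_semilattice_sup_bot set"
  assumes "finite S"
  shows "card (closure_set S) \<le> 2 ^ card S"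
  using card_image_le[of "Pow S" fsup] assms
  by (simp add: closure_set_eq_image_Pow card_Pow)

lemma finite_closure_set_cards:
  "finite {card (closure_set (S :: 'a::bounded_semilattice_sup_bot set)) | S. finite S \<and> card S \<le> n}"
proof (rule finite_subset[of _ "{..2 ^ n}"])
  show "{card (closure_set (S :: 'a set)) | S. finite S \<and> card S \<le> n} \<subseteq> {..2 ^ n}"
    using card_closure_set_le order_trans power_increasing[of _ n "2::nat"] by fastforce
qed simp

lemma CS_le_two_power: "CS TYPE('a::bounded_semilattice_sup_bot) n \<le> 2 ^ n"
proof -
  have "card (closure_set S) \<le> 2 ^ n" if "finite S" "card S \<le> n" for S :: "'a set"
    using card_closure_set_le[OF that(1)] power_increasing[OF that(2), of "2::nat"] by linarith
  then show ?thesis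
    unfolding CS_def using finite_closure_set_cards by (subst Max_le_iff) auto
qed

lemma card_closure_set_le_CS:
  fixes S :: "'a::bounded_semilattice_sup_bot set"
  assumes "finite S" "card S \<le> n"
  shows "card (closure_set S) \<le> CS TYPE('a) n"
  unfolding CS_def using assms finite_closure_set_cards by (intro Max_ge) auto

lemma fsup_image_singletons:
  fixes T :: "'a::order set"
  assumes "finite T"
  shows "fsup ((\<lambda>x. abs_explat {x}) ` T) = abs_explat T"
  using assms
proof (induction T rule: finite_induct)
  case empty
  show ?case by (simp add: bot_explat_def)
next
  case (insert x T)
  then show ?case by (simp add: sup_explat.abs_eq)
qed

lemma closure_set_image_singletons:
  fixes A :: "'a::order set"
  assumes "finite A"
  shows "closure_set ((\<lambda>x. abs_explat {x}) ` A) = abs_explat ` Pow A"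
proof -
  have "closure_set ((\<lambda>x. abs_explat {x}) ` A)
      = (\<lambda>T. fsup ((\<lambda>x. abs_explat {x}) ` T)) ` Pow A"
    by (simp add: closure_set_eq_image_Pow image_Pow_surj[OF refl, symmetric] image_image)
  also have "\<dots> = abs_explat ` Pow A"
    using assms by (intro image_cong) (auto intro: fsup_image_singletons finite_subset)
  finally show ?thesis .
qed

lemma inj_on_abs_explat_Pow_antichain:
  fixes A :: "'a::order set"
  assumes antichain: "\<forall>x\<in>A. \<forall>y\<in>A. x \<le> y \<longrightarrow> x = y"
  shows "inj_on (abs_explat :: 'a set \<Rightarrow> 'a explat) (Pow A)"
proof (rule inj_onI)
  fix T1 T2 assume "T1 \<in> Pow A" "T2 \<in> Pow A" "abs_explat T1 = (abs_explat T2 :: 'a explat)"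
  then show "T1 = T2"
    using antichain unfolding explat.abs_eq_iff exp_eq_def exp_le_def by blast
qed

lemma card_closure_set_antichain_singletons:
  fixes A :: "'a::order set"
  assumes "finite A" and "\<forall>x\<in>A. \<forall>y\<in>A. x \<le> y \<longrightarrow> x = y"
  shows "card ((\<lambda>x. abs_explat {x}) ` A) = card A"
    and "card (closure_set ((\<lambda>x. abs_explat {x}) ` A)) = 2 ^ card A"
proof -
  have inj: "inj_on (abs_explat :: 'a set \<Rightarrow> 'a explat) (Pow A)"
    by (rule inj_on_abs_explat_Pow_antichain) fact
  then have "inj_on (\<lambda>x. abs_explat {x} :: 'a explat) A"
    by (auto simp: inj_on_def)
  then show "card ((\<lambda>x. abs_explat {x}) ` A) = card A"
    by (rule card_image)
  show "card (closure_set ((\<lambda>x. abs_explat {x}) ` A)) = 2 ^ card A"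
    using inj assms(1) by (simp add: closure_set_image_singletons card_image card_Pow)
qed

lemma CS_explat_eq_two_power:
  fixes L :: "'a::order set"
  assumes "infinite L" and antichain: "\<forall>x\<in>L. \<forall>y\<in>L. x \<le> y \<longrightarrow> x = y"
  shows "CS TYPE('a explat) n = 2 ^ n"
proof (rule antisym)
  show "CS TYPE('a explat) n \<le> 2 ^ n"
    by (rule CS_le_two_power)
  obtain A where A: "A \<subseteq> L" "finite A" "card A = n"
    using infinite_arbitrarily_large[OF \<open>infinite L\<close>] by blast
  then have "\<forall>x\<in>A. \<forall>y\<in>A. x \<le> y \<longrightarrow> x = y"
    using antichain by blast
  note card_singletons = card_closure_set_antichain_singletons[OF \<open>finite A\<close> this]
  show "2 ^ n \<le> CS TYPE('a explat) n"
    using card_closure_set_le_CS[of "(\<lambda>x. abs_explat {x}) ` A" n] card_singletons A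
    by simp
qed

theorem mainTheorem6:
  fixes L :: "'a::bounded_semilattice_sup_bot set"
  assumes "infinite L"
    and "\<forall>l\<in>L. \<forall>l'\<in>L. l \<le> l' \<longrightarrow> l = l'"
  shows "(\<lambda>n. real (CS TYPE('a explat) n)) \<in> \<Theta>(\<lambda>n. 2 ^ n)"
proof -
  have "(\<lambda>n. real (CS TYPE('a explat) n)) = (\<lambda>n. 2 ^ n)"
    using CS_explat_eq_two_power[OF assms] by simp
  then show ?thesis by simp
qed

end
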